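(* Let $m$ and $n$ be powers of $2$ with $m \ge 16$, $n \ge 4$ and $m \le 4n$, and let $$G = G(m,n) := \langle a, b \mid a^m = 1,\ b^n = 1,\ [b,a] = a^4 \rangle.$$ Let $N = \langle a^4 \rangle$. Then: - $N$ is a characteristic subgroup of $G$; - $G/N$ is abelian; - there is no automorphism $\alpha$ of $G$ whose induced automorphism on $G/N$ is the inversion map $gN \mapsto g^{-1}N$.
   Context: Commutators are $[x,y] = x^{-1}y^{-1}xy$. *)

theory Defs
  imports "HOL-Algebra.Algebra"
begin

text \<open>Group presentations, built from scratch (no free groups in the library).
A word is a list of letters (g, e): generator g, with e = True meaning the inverse g^-1.\<close>

definition inv_letter :: "'g \<times> bool \<Rightarrow> 'g \<times> bool" where
  "inv_letter l = (fst l, \<not> snd l)"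

inductive pres_eq :: "('g \<times> bool) list set \<Rightarrow> ('g \<times> bool) list \<Rightarrow> ('g \<times> bool) list \<Rightarrow> bool"
  for R where
  refl: "pres_eq R w w"
| sym: "pres_eq R u v \<Longrightarrow> pres_eq R v u"
| trans: "pres_eq R u v \<Longrightarrow> pres_eq R v w \<Longrightarrow> pres_eq R u w"
| ctx: "pres_eq R u v \<Longrightarrow> pres_eq R (x @ u @ y) (x @ v @ y)"
| cancel: "pres_eq R [l, inv_letter l] []"
| rel: "r \<in> R \<Longrightarrow> pres_eq R r []"

definition presented_group :: "('g \<times> bool) list set \<Rightarrow> ('g \<times> bool) list set monoid" where
  "presented_group R =
     \<lparr> carrier = UNIV // {(u, v). pres_eq R u v},
       monoid.mult = (\<lambda>A B. {w. \<exists>u\<in>A. \<exists>v\<in>B. pres_eq R w (u @ v)}),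
       one = {w. pres_eq R w []} \<rparr>"

definition word_class :: "('g \<times> bool) list set \<Rightarrow> ('g \<times> bool) list \<Rightarrow> ('g \<times> bool) list set" where
  "word_class R w = {u. pres_eq R u w}"

text \<open>G(m,n) = < a, b | a^m = 1, b^n = 1, [b,a] = a^4 >, with [x,y] = x^-1 y^-1 x y.
Generator a is False, b is True. The relator for [b,a] = a^4 is b^-1 a^-1 b a a^-4.\<close>
definition relators_Gmn :: "nat \<Rightarrow> nat \<Rightarrow> (bool \<times> bool) list set" where
  "relators_Gmn m n =
     { replicate m (False, False),
       replicate n (True, False),
       [(True, True), (False, True), (True, False), (False, False)] @ replicate 4 (False, True) }"

definition Gmn :: "nat \<Rightarrow> nat \<Rightarrow> (bool \<times> bool) list set monoid" where
  "Gmn m n = presented_group (relators_Gmn m n)"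

definition gen_a :: "nat \<Rightarrow> nat \<Rightarrow> (bool \<times> bool) list set" where
  "gen_a m n = word_class (relators_Gmn m n) [(False, False)]"

definition gen_b :: "nat \<Rightarrow> nat \<Rightarrow> (bool \<times> bool) list set" where
  "gen_b m n = word_class (relators_Gmn m n) [(True, False)]"

end

theory Submission
  imports Defs
begin

(* The relation [b,a] = a^4 says b^-1 a b = a^-3, so every element of G is b^j a^i and the
   commutator of b^j a^i and b^k a^l is a^(i((-3)^k - 1) - l((-3)^j - 1)). As (-3)^k = 1 mod 4,
   all commutators lie in N = <a^4>, and a^4 = [b,a] is one of them: N is the derived subgroup,
   hence characteristic with abelian quotient.
   An endomorphism inducing inversion on G/N must send a to a^s with s = -1 mod 4 and b to
   b^-1 a^(4u (-3)^(n-1)). Applying it to [b,a] = a^4 yields a^(s(1 - P)) = a^(4s) with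
   P = (-3)^(n-1) = 5 mod 16, so the order of a divides s(P + 3), which is 8 modulo 16. But 16
   divides the order of a, as G acts on Z/16 with a acting as t + 1 and b as 5 t. *)

lemma pres_eq_append:
  assumes "pres_eq R u u'" and "pres_eq R v v'"
  shows "pres_eq R (u @ v) (u' @ v')"
proof -
  have "pres_eq R ([] @ u @ v) ([] @ u' @ v)" by (rule pres_eq.ctx) fact
  moreover have "pres_eq R (u' @ v @ []) (u' @ v' @ [])" by (rule pres_eq.ctx) fact
  ultimately show ?thesis by (auto intro: pres_eq.trans)
qed

lemma word_class_eq_iff: "word_class R u = word_class R v \<longleftrightarrow> pres_eq R u v"
  unfolding word_class_def by (auto intro: pres_eq.refl pres_eq.sym pres_eq.trans)

lemma carrier_presented_group: "carrier (presented_group R) = range (word_class R)"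
  unfolding presented_group_def word_class_def quotient_def by (auto intro: pres_eq.sym)

lemma word_class_closed [simp]: "word_class R w \<in> carrier (presented_group R)"
  by (simp add: carrier_presented_group)

lemma presented_group_mult [simp]:
  "word_class R u \<otimes>\<^bsub>presented_group R\<^esub> word_class R v = word_class R (u @ v)"
  unfolding presented_group_def word_class_def
  by (auto intro: pres_eq.refl pres_eq.trans pres_eq_append)

lemma presented_group_one: "\<one>\<^bsub>presented_group R\<^esub> = word_class R []"
  unfolding presented_group_def word_class_def by simp

definition inverse_word :: "('g \<times> bool) list \<Rightarrow> ('g \<times> bool) list" where
  "inverse_word w = rev (map inv_letter w)"

lemma pres_eq_inverse_word_append: "pres_eq R (inverse_word w @ w) []"
proof (induction w)
  case Nil
  show ?case by (simp add: inverse_word_def pres_eq.refl)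
next
  case (Cons l w)
  have "pres_eq R [inv_letter l, l] []"
    using pres_eq.cancel[of R "inv_letter l"] by (simp add: inv_letter_def)
  then have "pres_eq R (inverse_word w @ [inv_letter l, l] @ w) (inverse_word w @ [] @ w)"
    by (rule pres_eq.ctx)
  then have "pres_eq R (inverse_word (l # w) @ l # w) (inverse_word w @ w)"
    by (simp add: inverse_word_def)
  then show ?case using Cons.IH by (rule pres_eq.trans)
qed

lemma group_presented_group: "group (presented_group R)"
proof (rule groupI)
  fix x assume "x \<in> carrier (presented_group R)"
  then obtain w where "x = word_class R w" by (auto simp: carrier_presented_group)
  then show "\<exists>y\<in>carrier (presented_group R). y \<otimes>\<^bsub>presented_group R\<^esub> x = \<one>\<^bsub>presented_group R\<^esub>"
    by (intro bexI[of _ "word_class R (inverse_word w)"])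
      (simp_all add: presented_group_one word_class_eq_iff pres_eq_inverse_word_append)
qed (auto simp: carrier_presented_group presented_group_one)

lemma presented_group_pow_letter:
  "word_class R [l] [^]\<^bsub>presented_group R\<^esub> (k::nat) = word_class R (replicate k l)"
  by (induction k) (simp_all add: presented_group_one replicate_append_same[symmetric])

lemma presented_group_inv_letter:
  "inv\<^bsub>presented_group R\<^esub> (word_class R [l]) = word_class R [inv_letter l]"
proof -
  interpret group "presented_group R" by (rule group_presented_group)
  have "word_class R [inv_letter l] \<otimes>\<^bsub>presented_group R\<^esub> word_class R [l] = \<one>\<^bsub>presented_group R\<^esub>"
    using pres_eq_inverse_word_append[of R "[l]"]
    by (simp add: presented_group_one word_class_eq_iff inverse_word_def)
  then show ?thesis by (simp add: inv_equality)
qed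

lemma presented_group_generated:
  "generate (presented_group R) (range (\<lambda>g. word_class R [(g, False)])) = carrier (presented_group R)"
proof
  interpret group "presented_group R" by (rule group_presented_group)
  show "generate (presented_group R) (range (\<lambda>g. word_class R [(g, False)])) \<subseteq> carrier (presented_group R)"
    by (intro generate_incl) auto
  have "word_class R w \<in> generate (presented_group R) (range (\<lambda>g. word_class R [(g, False)]))" for w
  proof (induction w)
    case Nil
    show ?case using generate.one by (metis presented_group_one)
  next
    case (Cons l w)
    obtain g e where l: "l = (g, e)" by fastforce
    have "word_class R [l] \<in> generate (presented_group R) (range (\<lambda>g. word_class R [(g, False)]))"
    proof (cases e)
      case True
      then have "word_class R [l] = inv\<^bsub>presented_group R\<^esub> word_class R [(g, False)]"
        by (simp add: l presented_group_inv_letter inv_letter_def)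
      then show ?thesis by (auto intro: generate.inv)
    next
      case False
      then show ?thesis by (auto simp: l intro: generate.incl)
    qed
    then show ?case
      using generate.eng[OF _ Cons.IH] presented_group_mult[of R "[l]" w] by fastforce
  qed
  then show "carrier (presented_group R) \<subseteq> generate (presented_group R) (range (\<lambda>g. word_class R [(g, False)]))"
    by (auto simp: carrier_presented_group)
qed

lemma foldr_closed:
  assumes "\<And>l t. t \<in> S \<Longrightarrow> f l t \<in> S" and "t \<in> S"
  shows "foldr f w t \<in> S"
  using assms by (induction w) auto

lemma pres_eq_imp_foldr_eq:
  fixes f :: "'g \<times> bool \<Rightarrow> 'a \<Rightarrow> 'a"
  assumes "pres_eq R u v"
    and closed: "\<And>l t. t \<in> S \<Longrightarrow> f l t \<in> S"
    and cancel: "\<And>l t. t \<in> S \<Longrightarrow> f l (f (inv_letter l) t) = t"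
    and relator: "\<And>r t. r \<in> R \<Longrightarrow> t \<in> S \<Longrightarrow> foldr f r t = t"
    and "t \<in> S"
  shows "foldr f u t = foldr f v t"
  using assms(1,5)
proof (induction arbitrary: t rule: pres_eq.induct)
  case (ctx u v x y)
  then show ?case using foldr_closed[of S f, OF closed] by simp
qed (simp_all add: cancel relator)

lemma (in group) inv_mult_cancel_left:
  assumes "x \<in> carrier G" "y \<in> carrier G" "z \<in> carrier G"
  shows "inv (x \<otimes> y) \<otimes> (x \<otimes> z) = inv y \<otimes> z"
proof -
  have "inv x \<otimes> (x \<otimes> z) = z"
    using assms by (simp flip: m_assoc)
  then show ?thesis
    using assms by (simp add: inv_mult_group m_assoc)
qed

lemma (in group) conj_int_pow:
  assumes "x \<in> carrier G" and "g \<in> carrier G"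
  shows "inv g \<otimes> x [^] (i::int) \<otimes> g = (inv g \<otimes> x \<otimes> g) [^] i"
proof -
  have "(\<lambda>y. inv g \<otimes> y \<otimes> g) \<in> hom G G"
    using assms(2) by (intro homI) (simp_all add: m_assoc, metis inv_closed l_one m_assoc m_closed r_inv)
  from hom_int_pow[OF this assms(1) is_group is_group] show ?thesis by simp
qed

lemma (in group) rcos_eq_rcos_inv_imp_mult_mem:
  assumes "subgroup H G" and "x \<in> carrier G" and "y \<in> carrier G"
    and "H #> x = H #> inv y"
  shows "x \<otimes> y \<in> H"
proof -
  have "x \<in> H #> inv y"
    using rcos_self[OF assms(2,1)] assms(4) by simp
  then show ?thesis
    using subgroup.rcos_module_imp[OF assms(1) is_group inv_closed[OF assms(3)]] assms(3) by simp
qed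

lemma (in group) iso_image_derived:
  assumes "group H" and "\<phi> \<in> iso G H"
  shows "\<phi> ` derived G (carrier G) = derived H (carrier H)"
proof -
  interpret group_hom G H \<phi>
    using assms by (simp add: group_hom_def group_hom_axioms_def iso_imp_homomorphism)
  show ?thesis
    using derived_img[of "carrier G"] assms(2) by (simp add: Group.iso_iff)
qed

lemma pow_two_dvd_of_le:
  assumes "(2::nat) ^ e \<le> 2 ^ k"
  shows "(2::nat) ^ e dvd 2 ^ k"
  using assms by (simp add: le_imp_power_dvd)

lemma four_dvd_pow_minus_three_minus_one: "(4::int) dvd (-3) ^ k - 1"
proof -
  have "(-3::int) ^ k mod 4 = 1"
    using power_mod[of "-3::int" 4 k] by simp
  then show ?thesis using mod_eq_dvd_iff[of "(-3::int) ^ k" 4 1] by simp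
qed

lemma minus_three_pow_pred_mod_16:
  assumes "4 dvd n" and "0 < n"
  shows "(-3::int) ^ (n - 1) mod 16 = 5"
proof -
  obtain c where "n = 4 * c"
    using assms(1) ..
  with assms(2) have "n - 1 = 4 * (c - 1) + 3"
    by simp
  then have "(-3::int) ^ (n - 1) = 81 ^ (c - 1) * (-27)"
    by (simp add: power_add power_mult)
  then have "(-3::int) ^ (n - 1) mod 16 = (81 ^ (c - 1) mod 16 * (-27)) mod 16"
    by (simp only: mod_mult_left_eq)
  also have "\<dots> = 5"
    using power_mod[of "81::int" 16 "c - 1"] by simp
  finally show ?thesis .
qed

lemma not_sixteen_dvd_odd_mult:
  assumes "P mod 16 = 5"
  shows "\<not> (16::int) dvd (4 * k - 1) * (P + 3)"
proof
  obtain r where "P = 16 * r + 5"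
    using assms by (metis div_mult_mod_eq mult.commute)
  then have "16 * (4 * k * r + 2 * k - r) - (4 * k - 1) * (P + 3) = 8"
    by (simp add: algebra_simps)
  moreover assume "16 dvd (4 * k - 1) * (P + 3)"
  then have "16 dvd 16 * (4 * k * r + 2 * k - r) - (4 * k - 1) * (P + 3)"
    by (intro dvd_diff) simp_all
  ultimately show False by simp
qed

locale gmn_relations = group G for G (structure) +
  fixes a b :: 'a and n :: nat
  assumes generated: "generate G {a, b} = carrier G"
    and n_pos: "0 < n"
    and pow_b_n: "b [^] n = \<one>"
    and commutator_b_a: "inv b \<otimes> inv a \<otimes> b \<otimes> a = a [^] (4::nat)"
begin

lemma a_closed [simp]: "a \<in> carrier G"
  and b_closed [simp]: "b \<in> carrier G"
proof -
  have "{a, b} \<subseteq> generate G {a, b}"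
    by (blast intro: generate.incl)
  then show "a \<in> carrier G" and "b \<in> carrier G"
    unfolding generated by simp_all
qed

lemma conj_b_a: "inv b \<otimes> a \<otimes> b = a [^] (-3::int)"
proof -
  have "inv b \<otimes> inv a \<otimes> b \<otimes> a = a [^] (3::nat) \<otimes> a"
    using commutator_b_a by (simp flip: nat_pow_Suc)
  then have "inv b \<otimes> inv a \<otimes> b = a [^] (3::int)"
    using int_pow_int[of G a 3] by (simp add: right_cancel)
  moreover have "inv (inv b \<otimes> inv a \<otimes> b) = inv b \<otimes> (a \<otimes> b)"
    by (simp add: inv_mult_group m_assoc)
  ultimately show ?thesis
    by (simp add: int_pow_neg m_assoc)
qed

lemma conj_pow_b_a: "inv (b [^] j) \<otimes> a \<otimes> b [^] j = a [^] ((-3::int) ^ j)"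
proof (induction j)
  case (Suc j)
  have "inv (b [^] Suc j) \<otimes> a \<otimes> b [^] Suc j = inv b \<otimes> (inv (b [^] j) \<otimes> a \<otimes> b [^] j) \<otimes> b"
    by (simp add: inv_mult_group m_assoc)
  also have "\<dots> = (inv b \<otimes> a \<otimes> b) [^] ((-3::int) ^ j)"
    by (simp add: Suc.IH conj_int_pow)
  also have "\<dots> = a [^] ((-3::int) ^ Suc j)"
    by (simp add: conj_b_a int_pow_pow)
  finally show ?case .
qed simp

lemma int_pow_a_mult_pow_b: "a [^] (i::int) \<otimes> b [^] j = b [^] j \<otimes> a [^] (i * (-3) ^ j)"
proof -
  have "a [^] (i * (-3) ^ j) = inv (b [^] j) \<otimes> (a [^] i \<otimes> b [^] j)"
    by (simp add: conj_int_pow conj_pow_b_a int_pow_pow mult.commute flip: m_assoc)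
  then show ?thesis
    by (simp add: inv_solve_left)
qed

lemma inv_b: "inv b = b [^] (n - 1)"
proof -
  have "b [^] (n - 1) \<otimes> b = \<one>"
    using n_pos pow_b_n by (metis Suc_diff_1 b_closed nat_pow_Suc)
  then show ?thesis by (simp add: inv_equality)
qed

lemma normal_form_mult:
  "(b [^] j \<otimes> a [^] (i::int)) \<otimes> (b [^] k \<otimes> a [^] (l::int)) = b [^] (j + k) \<otimes> a [^] (i * (-3) ^ k + l)"
proof -
  have "(b [^] j \<otimes> a [^] i) \<otimes> (b [^] k \<otimes> a [^] l) = b [^] j \<otimes> ((a [^] i \<otimes> b [^] k) \<otimes> a [^] l)"
    by (simp add: m_assoc)
  also have "\<dots> = b [^] (j + k) \<otimes> a [^] (i * (-3) ^ k + l)"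
    by (simp add: int_pow_a_mult_pow_b m_assoc int_pow_mult flip: nat_pow_mult)
  finally show ?thesis .
qed

lemma normal_form:
  assumes "x \<in> carrier G"
  shows "\<exists>(j::nat) (i::int). x = b [^] j \<otimes> a [^] i"
proof -
  have "x \<in> generate G {a, b}" using assms generated by simp
  then show ?thesis
  proof (induction rule: generate.induct)
    case one
    show ?case by (intro exI[of _ 0]) simp
  next
    case (incl h)
    have "a = b [^] (0::nat) \<otimes> a [^] (1::int)" and "b = b [^] (1::nat) \<otimes> a [^] (0::int)"
      by simp_all
    with incl show ?case by blast
  next
    case (inv h)
    have "inv a = b [^] (0::nat) \<otimes> a [^] (-1::int)" and "inv b = b [^] (n - 1) \<otimes> a [^] (0::int)"
      by (simp_all add: inv_b int_pow_neg)
    with inv show ?case by blast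
  next
    case (eng h1 h2)
    then show ?case by (metis normal_form_mult)
  qed
qed

lemma commutator_normal_form:
  fixes i l :: int and j k :: nat
  defines "x \<equiv> b [^] j \<otimes> a [^] i" and "y \<equiv> b [^] k \<otimes> a [^] l"
  shows "inv x \<otimes> inv y \<otimes> x \<otimes> y = a [^] (i * ((-3) ^ k - 1) - l * ((-3) ^ j - 1))"
proof -
  have "inv x \<otimes> inv y \<otimes> x \<otimes> y = inv (y \<otimes> x) \<otimes> (x \<otimes> y)"
    by (simp add: x_def y_def inv_mult_group m_assoc)
  also have "\<dots> = inv (b [^] (j + k) \<otimes> a [^] (l * (-3) ^ j + i)) \<otimes> (b [^] (j + k) \<otimes> a [^] (i * (-3) ^ k + l))"
    by (simp add: x_def y_def normal_form_mult add.commute del: nat_pow_mult)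
  also have "\<dots> = a [^] (- (l * (-3) ^ j + i)) \<otimes> a [^] (i * (-3) ^ k + l)"
    by (simp only: inv_mult_cancel_left int_pow_neg a_closed b_closed int_pow_closed nat_pow_closed)
  also have "\<dots> = a [^] (- (l * (-3) ^ j + i) + (i * (-3) ^ k + l))"
    by (rule int_pow_mult[symmetric]) simp
  also have "- (l * (-3) ^ j + i) + (i * (-3) ^ k + l) = i * ((-3) ^ k - 1) - l * ((-3) ^ j - 1)"
    by (simp add: algebra_simps)
  finally show ?thesis .
qed

lemma generate_pow_a4: "generate G {a [^] (4::nat)} = {a [^] (4 * k) | k::int. True}"
proof -
  have "(a [^] (4::nat)) [^] k = a [^] (4 * k)" for k :: int
    using int_pow_pow[of a 4 k] int_pow_int[of G a 4] by simp
  then show ?thesis by (simp add: generate_pow)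
qed

lemma commutator_in_generate_a4:
  assumes "x \<in> carrier G" and "y \<in> carrier G"
  shows "inv x \<otimes> inv y \<otimes> x \<otimes> y \<in> generate G {a [^] (4::nat)}"
proof -
  obtain j :: nat and i :: int where "x = b [^] j \<otimes> a [^] i"
    using normal_form assms(1) by blast
  moreover obtain k :: nat and l :: int where "y = b [^] k \<otimes> a [^] l"
    using normal_form assms(2) by blast
  ultimately have "inv x \<otimes> inv y \<otimes> x \<otimes> y = a [^] (i * ((-3) ^ k - 1) - l * ((-3) ^ j - 1))"
    by (simp only: commutator_normal_form)
  moreover have "4 dvd i * ((-3) ^ k - 1) - l * ((-3) ^ j - 1)"
    by (intro dvd_diff dvd_mult four_dvd_pow_minus_three_minus_one)
  then obtain t where "i * ((-3) ^ k - 1) - l * ((-3) ^ j - 1) = 4 * t" ..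
  ultimately show ?thesis
    by (auto simp: generate_pow_a4)
qed

lemma derived_eq_generate_a4: "derived G (carrier G) = generate G {a [^] (4::nat)}"
proof
  have "a [^] (4::nat) = inv b \<otimes> inv a \<otimes> inv (inv b) \<otimes> inv (inv a)"
    using commutator_b_a by simp
  then have "a [^] (4::nat) \<in> derived_set G (carrier G)"
    using inv_closed[OF a_closed] inv_closed[OF b_closed] by blast
  then show "generate G {a [^] (4::nat)} \<subseteq> derived G (carrier G)"
    unfolding derived_def by (intro mono_generate) simp
  have "h1 \<otimes> h2 \<otimes> inv h1 \<otimes> inv h2 \<in> generate G {a [^] (4::nat)}"
    if "h1 \<in> carrier G" and "h2 \<in> carrier G" for h1 h2
    using commutator_in_generate_a4[of "inv h1" "inv h2"] that by simp
  then show "derived G (carrier G) \<subseteq> generate G {a [^] (4::nat)}"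
    unfolding derived_def by (intro generate_subgroup_incl generate_is_subgroup) auto
qed

lemma inverting_mod_derived_images:
  assumes "\<alpha> \<in> hom G G"
    and "\<forall>g\<in>carrier G. derived G (carrier G) #> \<alpha> g = derived G (carrier G) #> inv g"
  obtains k u :: int
  where "\<alpha> a = a [^] (4 * k - 1)" and "\<alpha> b = b [^] (n - 1) \<otimes> a [^] (4 * u * (-3) ^ (n - 1))"
proof -
  have "\<alpha> g \<otimes> g \<in> generate G {a [^] (4::nat)}" if "g \<in> carrier G" for g
    using rcos_eq_rcos_inv_imp_mult_mem[OF derived_is_subgroup, of "carrier G"] assms that
    by (simp add: hom_in_carrier derived_eq_generate_a4)
  then obtain k u :: int where k: "\<alpha> a \<otimes> a = a [^] (4 * k)" and u: "\<alpha> b \<otimes> b = a [^] (4 * u)"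
    unfolding generate_pow_a4 using a_closed b_closed by blast
  have "\<alpha> a = a [^] (4 * k) \<otimes> a [^] (-1::int)"
    using k assms(1) by (simp add: hom_in_carrier inv_solve_right int_pow_neg)
  then have "\<alpha> a = a [^] (4 * k - 1)"
    by (simp flip: int_pow_mult)
  moreover have "\<alpha> b = a [^] (4 * u) \<otimes> inv b"
    using u assms(1) by (simp add: hom_in_carrier inv_solve_right)
  then have "\<alpha> b = b [^] (n - 1) \<otimes> a [^] (4 * u * (-3) ^ (n - 1))"
    by (simp add: inv_b int_pow_a_mult_pow_b)
  ultimately show ?thesis by (rule that)
qed

lemma no_hom_inverting_mod_derived:
  assumes "16 dvd ord a" and "4 dvd n"
  shows "\<not> (\<exists>\<alpha>\<in>hom G G. \<forall>g\<in>carrier G.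
           derived G (carrier G) #> \<alpha> g = derived G (carrier G) #> inv g)"
proof
  assume "\<exists>\<alpha>\<in>hom G G. \<forall>g\<in>carrier G. derived G (carrier G) #> \<alpha> g = derived G (carrier G) #> inv g"
  then obtain \<alpha> where hom: "\<alpha> \<in> hom G G"
    and "\<forall>g\<in>carrier G. derived G (carrier G) #> \<alpha> g = derived G (carrier G) #> inv g" ..
  then obtain k u :: int
    where "\<alpha> a = a [^] (4 * k - 1)" and "\<alpha> b = b [^] (n - 1) \<otimes> a [^] (4 * u * (-3) ^ (n - 1))"
    by (rule inverting_mod_derived_images)
  from hom interpret group_hom G G \<alpha>
    by (simp add: group_hom_def group_hom_axioms_def)
  define s where "s = 4 * k - 1"
  define P where "P = (-3::int) ^ (n - 1)"
  have alpha_a: "\<alpha> a = b [^] (0::nat) \<otimes> a [^] s" and alpha_b: "\<alpha> b = b [^] (n - 1) \<otimes> a [^] (4 * u * P)"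
    by (simp_all add: s_def P_def \<open>\<alpha> a = _\<close> \<open>\<alpha> b = _\<close>)
  have "a [^] (s * (1 - P)) = inv (\<alpha> b) \<otimes> inv (\<alpha> a) \<otimes> \<alpha> b \<otimes> \<alpha> a"
    unfolding alpha_a alpha_b commutator_normal_form by (simp add: P_def algebra_simps)
  also have "\<dots> = \<alpha> (inv b \<otimes> inv a \<otimes> b \<otimes> a)"
    by simp
  also have "\<dots> = (\<alpha> a) [^] (4::nat)"
    using commutator_b_a by (simp add: hom_nat_pow)
  also have "\<dots> = (a [^] s) [^] int 4"
    unfolding int_pow_int alpha_a by simp
  also have "\<dots> = a [^] (4 * s)"
    by (simp add: int_pow_pow mult.commute)
  finally have "int (ord a) dvd 4 * s - s * (1 - P)"
    by (simp add: int_pow_eq)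
  moreover have "(16::int) dvd int (ord a)"
    using assms(1) int_dvd_int_iff[of 16 "ord a"] by simp
  moreover have "4 * s - s * (1 - P) = (4 * k - 1) * (P + 3)"
    by (simp add: s_def algebra_simps)
  ultimately have "16 dvd (4 * k - 1) * (P + 3)"
    by (metis dvd_trans)
  then show False
    using not_sixteen_dvd_odd_mult minus_three_pow_pred_mod_16[OF assms(2) n_pos] by (simp add: P_def)
qed

end

lemma gmn_relations_Gmn:
  assumes "0 < n"
  shows "gmn_relations (Gmn m n) (gen_a m n) (gen_b m n) n"
proof -
  let ?R = "relators_Gmn m n" and ?G = "Gmn m n" and ?a = "gen_a m n" and ?b = "gen_b m n"
  interpret group ?G
    unfolding Gmn_def by (rule group_presented_group)
  have "range (\<lambda>g. word_class ?R [(g, False)]) = {?a, ?b}"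
    by (auto simp: gen_a_def gen_b_def UNIV_bool)
  then have generated: "generate ?G {?a, ?b} = carrier ?G"
    unfolding Gmn_def by (metis presented_group_generated)
  have "pres_eq ?R (replicate n (True, False)) []"
    by (simp add: pres_eq.rel relators_Gmn_def)
  then have pow_b: "?b [^]\<^bsub>?G\<^esub> n = \<one>\<^bsub>?G\<^esub>"
    by (simp add: Gmn_def gen_b_def presented_group_pow_letter presented_group_one word_class_eq_iff)
  have closed: "?a \<in> carrier ?G" "?b \<in> carrier ?G"
    by (simp_all add: Gmn_def gen_a_def gen_b_def)
  have "inv\<^bsub>?G\<^esub> ?b \<otimes>\<^bsub>?G\<^esub> inv\<^bsub>?G\<^esub> ?a \<otimes>\<^bsub>?G\<^esub> ?b \<otimes>\<^bsub>?G\<^esub> ?a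
      \<otimes>\<^bsub>?G\<^esub> (inv\<^bsub>?G\<^esub> ?a) [^]\<^bsub>?G\<^esub> (4::nat) = \<one>\<^bsub>?G\<^esub>"
    by (simp add: Gmn_def gen_a_def gen_b_def presented_group_pow_letter presented_group_inv_letter
        presented_group_one word_class_eq_iff inv_letter_def relators_Gmn_def pres_eq.rel)
  then have "inv\<^bsub>?G\<^esub> ?b \<otimes>\<^bsub>?G\<^esub> inv\<^bsub>?G\<^esub> ?a \<otimes>\<^bsub>?G\<^esub> ?b \<otimes>\<^bsub>?G\<^esub> ?a
      = ?a [^]\<^bsub>?G\<^esub> (4::nat)"
    using closed by (metis inv_equality inv_inv m_closed inv_closed nat_pow_closed nat_pow_inv)
  with pow_b generated assms show ?thesis
    unfolding gmn_relations_def gmn_relations_axioms_def by (simp add: is_group)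
qed

fun letter_action_mod16 :: "bool \<times> bool \<Rightarrow> int \<Rightarrow> int" where
  "letter_action_mod16 (False, e) t = (if e then t - 1 else t + 1) mod 16"
| "letter_action_mod16 (True, e) t = (if e then 13 * t else 5 * t) mod 16"

lemma foldr_letter_action_mod16_replicate:
  assumes "t \<in> {0..<16}"
  shows "foldr letter_action_mod16 (replicate k (False, False)) t = (t + int k) mod 16"
    and "foldr letter_action_mod16 (replicate k (True, False)) t = (5 ^ k * t) mod 16"
  using assms by (induction k) (simp_all add: mod_simps algebra_simps mod_pos_pos_trivial)

lemma pres_eq_Gmn_imp_foldr_letter_action_mod16_eq:
  assumes "16 dvd m" and "4 dvd n" and "pres_eq (relators_Gmn m n) u v" and "t \<in> {0..<16}"
  shows "foldr letter_action_mod16 u t = foldr letter_action_mod16 v t"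
proof -
  have five_times_thirteen: "65 * t mod 16 = t" if "t \<in> {0..<16}" for t :: int
  proof -
    have "65 * t mod 16 = (t + 16 * (4 * t)) mod 16" by simp
    also have "\<dots> = t mod 16" by (rule mod_mult_self2)
    also have "\<dots> = t" using that by simp
    finally show ?thesis .
  qed
  show ?thesis
  proof (rule pres_eq_imp_foldr_eq[OF assms(3) _ _ _ assms(4)])
    fix l :: "bool \<times> bool" and t :: int
    assume t: "t \<in> {0..<16}"
    obtain g e where l: "l = (g, e)" by fastforce
    show "letter_action_mod16 l t \<in> {0..<16}"
      by (cases g) (simp_all add: l)
    show "letter_action_mod16 l (letter_action_mod16 (inv_letter l) t) = t"
      using t five_times_thirteen[OF t]
      by (cases g) (simp_all add: l inv_letter_def mod_simps mod_pos_pos_trivial)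
  next
    fix r and t :: int
    assume t: "t \<in> {0..<16}"
    assume "r \<in> relators_Gmn m n"
    then consider "r = replicate m (False, False)" | "r = replicate n (True, False)"
      | "r = [(True, True), (False, True), (True, False), (False, False)] @ replicate 4 (False, True)"
      by (auto simp: relators_Gmn_def)
    then show "foldr letter_action_mod16 r t = t"
    proof cases
      case 1
      then have "foldr letter_action_mod16 r t = (t + int m) mod 16"
        using foldr_letter_action_mod16_replicate(1)[OF t] by simp
      then show ?thesis
        using assms(1) t by (auto simp: mod_pos_pos_trivial elim!: dvdE)
    next
      case 2
      obtain c where "n = 4 * c" using assms(2) ..
      then have "(5::int) ^ n mod 16 = 1"
        using power_mod[of "625::int" 16 c] by (simp add: power_mult)
      moreover have "foldr letter_action_mod16 r t = (5 ^ n * t) mod 16"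
        using 2 foldr_letter_action_mod16_replicate(2)[OF t] by simp
      ultimately show ?thesis
        using t by (simp add: mod_pos_pos_trivial flip: mod_mult_left_eq)
    next
      case 3
      then show ?thesis
        using five_times_thirteen[OF t] by (simp add: numeral_eq_Suc mod_simps algebra_simps)
    qed
  qed
qed

lemma sixteen_dvd_ord_gen_a:
  assumes "16 dvd m" and "4 dvd n"
  shows "16 dvd group.ord (Gmn m n) (gen_a m n)"
proof -
  interpret group "Gmn m n"
    unfolding Gmn_def by (rule group_presented_group)
  let ?e = "ord (gen_a m n)"
  have "gen_a m n [^]\<^bsub>Gmn m n\<^esub> ?e = \<one>\<^bsub>Gmn m n\<^esub>"
    by (rule pow_ord_eq_1) (simp add: Gmn_def gen_a_def)
  then have "pres_eq (relators_Gmn m n) (replicate ?e (False, False)) []"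
    by (simp add: Gmn_def gen_a_def presented_group_pow_letter presented_group_one word_class_eq_iff)
  then have "foldr letter_action_mod16 (replicate ?e (False, False)) 0 = foldr letter_action_mod16 [] 0"
    by (rule pres_eq_Gmn_imp_foldr_letter_action_mod16_eq[OF assms]) simp
  then have "int ?e mod 16 = 0"
    using foldr_letter_action_mod16_replicate(1)[of 0 ?e] by (simp del: foldr_replicate)
  then show ?thesis
    by presburger
qed

theorem lemma3:
  fixes m n :: nat
  assumes "\<exists>k. m = 2 ^ k" and "\<exists>k. n = 2 ^ k"
    and "16 \<le> m" and "4 \<le> n" and "m \<le> 4 * n"
  defines "G \<equiv> Gmn m n"
    and "N \<equiv> generate (Gmn m n) {gen_a m n [^]\<^bsub>Gmn m n\<^esub> (4::nat)}"
  shows "(subgroup N G \<and> (\<forall>\<phi>\<in>iso G G. \<phi> ` N = N))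
       \<and> comm_group (G Mod N)
       \<and> \<not> (\<exists>\<alpha>\<in>iso G G. \<forall>g\<in>carrier G. N #>\<^bsub>G\<^esub> \<alpha> g = N #>\<^bsub>G\<^esub> inv\<^bsub>G\<^esub> g)"
proof -
  have m16: "16 dvd m" and n4: "4 dvd n"
    using assms(1-4) pow_two_dvd_of_le[of 4] pow_two_dvd_of_le[of 2] by auto
  have "0 < n"
    using assms(4) by simp
  then interpret gmn_relations G "gen_a m n" "gen_b m n" n
    unfolding G_def by (rule gmn_relations_Gmn)
  have N_eq: "N = derived G (carrier G)"
    unfolding N_def G_def[symmetric] derived_eq_generate_a4 ..
  have "\<not> (\<exists>\<alpha>\<in>hom G G. \<forall>g\<in>carrier G.
      derived G (carrier G) #>\<^bsub>G\<^esub> \<alpha> g = derived G (carrier G) #>\<^bsub>G\<^esub> inv\<^bsub>G\<^esub> g)"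
    using no_hom_inverting_mod_derived sixteen_dvd_ord_gen_a[OF m16 n4] n4 by (simp add: G_def)
  then show ?thesis
    unfolding N_eq using derived_is_subgroup iso_image_derived[OF is_group] derived_quot_is_comm_group
    by (auto dest: iso_imp_homomorphism)
qed

end
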